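(* Let $G$ be a tree and let $v\in V(G)$ be a vertex with $N_G(v)=\{v_1,\dots,v_r\}$, where $r\geq 2$ and $\deg_G(v_i)=1$ for all $i<r$. Let $e=\{v,v_r\}$. Then $$\nu_3(G\setminus N_G[e])\leq \nu_3(G)-1.$$
   Context: All graphs are finite and simple; a tree is a graph containing no cycle. $N_G(z)$ is the set of neighbors of $z$; for an edge $e=\{x,y\}$, $N_G[e]=N_G(x)\cup N_G(y)\cup\{x,y\}$, and $G\setminus N_G[e]$ is the induced subgraph of $G$ on $V(G)\setminus N_G[e]$. A $3$-path in $G$ is a sequence of three distinct vertices $a,b,c$ with $\{a,b\},\{b,c\}\in E(G)$. A $3$-path induced matching of $G$ is a collection of pairwise vertex-disjoint $3$-paths whose union is an induced subgraph of $G$ (the induced subgraph on the union of their vertices has no edges other than the path edges). $\nu_3(G)$ is the largest number of paths in a $3$-path induced matching of $G$. *)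

theory Defs
  imports Main
begin

definition simple_graph :: "'a set \<Rightarrow> 'a set set \<Rightarrow> bool" where
  "simple_graph V E \<longleftrightarrow> finite V \<and> (\<forall>e\<in>E. \<exists>x y. x \<noteq> y \<and> e = {x, y} \<and> x \<in> V \<and> y \<in> V)"

definition neighbors :: "'a set set \<Rightarrow> 'a \<Rightarrow> 'a set" where
  "neighbors E z = {u. {z, u} \<in> E}"

definition degree :: "'a set set \<Rightarrow> 'a \<Rightarrow> nat" where
  "degree E z = card (neighbors E z)"

definition closed_nbhd_edge :: "'a set set \<Rightarrow> 'a \<Rightarrow> 'a \<Rightarrow> 'a set" where
  "closed_nbhd_edge E x y = neighbors E x \<union> neighbors E y \<union> {x, y}"

definition induced_edges :: "'a set set \<Rightarrow> 'a set \<Rightarrow> 'a set set" where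
  "induced_edges E S = {e \<in> E. e \<subseteq> S}"

definition is_cycle :: "'a set \<Rightarrow> 'a set set \<Rightarrow> 'a list \<Rightarrow> bool" where
  "is_cycle V E cs \<longleftrightarrow> length cs \<ge> 3 \<and> distinct cs \<and> set cs \<subseteq> V \<and>
     (\<forall>i < length cs - 1. {cs ! i, cs ! Suc i} \<in> E) \<and> {last cs, hd cs} \<in> E"

definition is_tree :: "'a set \<Rightarrow> 'a set set \<Rightarrow> bool" where
  "is_tree V E \<longleftrightarrow> simple_graph V E \<and> (\<nexists>cs. is_cycle V E cs)"

definition path_verts :: "'a \<times> 'a \<times> 'a \<Rightarrow> 'a set" where
  "path_verts p = (case p of (a, b, c) \<Rightarrow> {a, b, c})"

definition path_edges :: "'a \<times> 'a \<times> 'a \<Rightarrow> 'a set set" where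
  "path_edges p = (case p of (a, b, c) \<Rightarrow> {{a, b}, {b, c}})"

definition is_3path :: "'a set \<Rightarrow> 'a set set \<Rightarrow> 'a \<times> 'a \<times> 'a \<Rightarrow> bool" where
  "is_3path V E p \<longleftrightarrow> (case p of (a, b, c) \<Rightarrow>
     a \<in> V \<and> b \<in> V \<and> c \<in> V \<and> a \<noteq> b \<and> b \<noteq> c \<and> a \<noteq> c \<and> {a, b} \<in> E \<and> {b, c} \<in> E)"

definition is_3path_induced_matching :: "'a set \<Rightarrow> 'a set set \<Rightarrow> ('a \<times> 'a \<times> 'a) set \<Rightarrow> bool" where
  "is_3path_induced_matching V E M \<longleftrightarrow>
     (\<forall>p\<in>M. is_3path V E p) \<and>
     (\<forall>p\<in>M. \<forall>q\<in>M. p \<noteq> q \<longrightarrow> path_verts p \<inter> path_verts q = {}) \<and>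
     induced_edges E (\<Union>p\<in>M. path_verts p) = (\<Union>p\<in>M. path_edges p)"

definition nu3 :: "'a set \<Rightarrow> 'a set set \<Rightarrow> nat" where
  "nu3 V E = Max {card M | M. finite M \<and> is_3path_induced_matching V E M}"

end

theory Submission
  imports Defs
begin

text \<open>Pick a leaf \<open>u\<noteq>v\<^sub>r\<close> adjacent to \<open>v\<close>. Every vertex of \<open>G \<setminus> N[e]\<close> is non-adjacent to
  \<open>v\<close> and \<open>v\<^sub>r\<close>, and also to \<open>u\<close>, whose only neighbour is \<open>v\<close>. Hence a maximum 3-path induced
  matching of \<open>G \<setminus> N[e]\<close> stays induced in \<open>G\<close> after adding the 3-path \<open>u, v, v\<^sub>r\<close>.\<close>

lemma simple_graph_edgeD:
  assumes "simple_graph V E" "{x, y} \<in> E"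
  shows "x \<noteq> y" "x \<in> V" "y \<in> V"
  using assms unfolding simple_graph_def by (metis doubleton_eq_iff)+

lemma simple_graph_induced_edges:
  assumes "simple_graph V E" "W \<subseteq> V"
  shows "simple_graph W (induced_edges E W)"
  using assms finite_subset unfolding simple_graph_def induced_edges_def by fastforce

lemma induced_matching_subset:
  assumes "is_3path_induced_matching V E M"
  shows "M \<subseteq> V \<times> V \<times> V"
  using assms unfolding is_3path_induced_matching_def is_3path_def by fastforce

lemma finite_induced_matching_sizes:
  assumes "finite V"
  shows "finite {card M |M. finite M \<and> is_3path_induced_matching V E M}"
proof (rule finite_subset)
  have "card M \<le> card (V \<times> V \<times> V)" if "is_3path_induced_matching V E M" for M
    using assms that by (intro card_mono induced_matching_subset) auto
  then show "{card M |M. finite M \<and> is_3path_induced_matching V E M} \<subseteq> {..card (V \<times> V \<times> V)}"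
    by auto
qed simp

lemma empty_induced_matching:
  assumes "simple_graph V E"
  shows "is_3path_induced_matching V E {}"
  using assms unfolding simple_graph_def is_3path_induced_matching_def induced_edges_def by auto

lemma card_le_nu3:
  assumes "simple_graph V E" "finite M" "is_3path_induced_matching V E M"
  shows "card M \<le> nu3 V E"
  unfolding nu3_def
proof (rule Max_ge)
  show "finite {card M |M. finite M \<and> is_3path_induced_matching V E M}"
    using assms(1) finite_induced_matching_sizes simple_graph_def by blast
qed (use assms(2,3) in blast)

lemma nu3_attained:
  assumes "simple_graph V E"
  obtains M where "finite M" "is_3path_induced_matching V E M" "card M = nu3 V E"
proof -
  have "nu3 V E \<in> {card M |M. finite M \<and> is_3path_induced_matching V E M}"
    unfolding nu3_def
  proof (rule Max_in)
    show "finite {card M |M. finite M \<and> is_3path_induced_matching V E M}"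
      using assms finite_induced_matching_sizes simple_graph_def by blast
    show "{card M |M. finite M \<and> is_3path_induced_matching V E M} \<noteq> {}"
      using empty_induced_matching[OF assms] by blast
  qed
  then show ?thesis using that by (auto simp only: mem_Collect_eq)
qed

lemma induced_edges_induced_edges:
  assumes "S \<subseteq> W"
  shows "induced_edges (induced_edges E W) S = induced_edges E S"
  using assms unfolding induced_edges_def by blast

lemma no_edge_into_pendant_path:
  assumes pendant: "neighbors E u = {v}"
    and x: "x \<in> V - closed_nbhd_edge E v w"
    and edge: "{x, y} \<in> E"
  shows "y \<notin> {u, v, w}"
proof -
  have "x \<notin> neighbors E v" "x \<notin> neighbors E w" "x \<noteq> v"
    using x unfolding closed_nbhd_edge_def by auto
  moreover have "x \<in> neighbors E y"
    using edge unfolding neighbors_def by (simp add: insert_commute)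
  ultimately show ?thesis using pendant by auto
qed

lemma induced_edges_Un_pendant_path:
  assumes G: "simple_graph V E"
    and pendant: "neighbors E u = {v}"
    and S: "S \<subseteq> V - closed_nbhd_edge E v w"
  shows "induced_edges E (S \<union> {u, v, w}) = induced_edges E S \<union> induced_edges E {u, v, w}"
proof
  show "induced_edges E (S \<union> {u, v, w}) \<subseteq> induced_edges E S \<union> induced_edges E {u, v, w}"
  proof
    fix e assume e: "e \<in> induced_edges E (S \<union> {u, v, w})"
    then have "e \<in> E" unfolding induced_edges_def by blast
    then obtain x y where xy: "e = {x, y}"
      using G unfolding simple_graph_def by blast
    then have edges: "{x, y} \<in> E" "{y, x} \<in> E"
      using \<open>e \<in> E\<close> by (simp_all add: insert_commute)
    have far: "b \<notin> {u, v, w}" if "a \<in> S" "{a, b} \<in> E" for a b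
      using no_edge_into_pendant_path[OF pendant _ that(2)] S that(1) by blast
    have "x \<in> S \<union> {u, v, w}" "y \<in> S \<union> {u, v, w}"
      using e xy(1) unfolding induced_edges_def by auto
    then have "e \<subseteq> S \<or> e \<subseteq> {u, v, w}"
      using far[OF _ edges(1)] far[OF _ edges(2)] xy by blast
    then show "e \<in> induced_edges E S \<union> induced_edges E {u, v, w}"
      using e unfolding induced_edges_def by blast
  qed
qed (auto simp: induced_edges_def)

lemma induced_edges_pendant_path:
  assumes G: "simple_graph V E"
    and path: "is_3path V E (u, v, w)"
    and pendant: "neighbors E u = {v}"
  shows "induced_edges E {u, v, w} = path_edges (u, v, w)"
proof
  have "w \<notin> neighbors E u"
    using pendant path unfolding is_3path_def by auto
  then have no_uw: "{u, w} \<notin> E"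
    unfolding neighbors_def by simp
  show "induced_edges E {u, v, w} \<subseteq> path_edges (u, v, w)"
  proof
    fix e assume "e \<in> induced_edges E {u, v, w}"
    then have e: "e \<in> E" "e \<subseteq> {u, v, w}" unfolding induced_edges_def by auto
    then obtain x y where "x \<noteq> y" "e = {x, y}"
      using G unfolding simple_graph_def by blast
    with e(2) have "e \<in> {{u, v}, {v, w}, {u, w}}"
      by (auto simp: insert_commute)
    moreover have "e \<noteq> {u, w}"
      using e(1) no_uw by blast
    ultimately show "e \<in> path_edges (u, v, w)"
      unfolding path_edges_def by blast
  qed
  show "path_edges (u, v, w) \<subseteq> induced_edges E {u, v, w}"
    using path unfolding induced_edges_def path_edges_def is_3path_def by auto
qed

lemma is_3path_induced_subgraph:
  assumes "is_3path W (induced_edges E W) p" "W \<subseteq> V"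
  shows "is_3path V E p"
  using assms unfolding is_3path_def induced_edges_def by (auto split: prod.splits)

lemma induced_matching_insert_pendant_path:
  assumes G: "simple_graph V E"
    and path: "is_3path V E (u, v, w)"
    and pendant: "neighbors E u = {v}"
    and W: "W \<subseteq> V - closed_nbhd_edge E v w"
    and M: "is_3path_induced_matching W (induced_edges E W) M"
  shows "is_3path_induced_matching V E (insert (u, v, w) M)" "(u, v, w) \<notin> M"
proof -
  define S where "S = (\<Union>q\<in>M. path_verts q)"
  have verts_in_W: "path_verts q \<subseteq> W" if "q \<in> M" for q
    using induced_matching_subset[OF M] that unfolding path_verts_def by auto
  then have S_W: "S \<subseteq> W"
    unfolding S_def by blast
  have "u \<in> neighbors E v"
    using pendant unfolding neighbors_def by (auto simp: insert_commute)
  then have path_outside_W: "path_verts (u, v, w) \<inter> W = {}"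
    using W unfolding path_verts_def closed_nbhd_edge_def by auto
  then show "(u, v, w) \<notin> M"
    using verts_in_W unfolding path_verts_def by blast
  have M_edges: "induced_edges E S = (\<Union>q\<in>M. path_edges q)"
    using M induced_edges_induced_edges[OF S_W]
    unfolding is_3path_induced_matching_def S_def by simp
  have "induced_edges E (\<Union>q\<in>insert (u, v, w) M. path_verts q) = induced_edges E (S \<union> {u, v, w})"
    unfolding S_def path_verts_def by (simp add: Un_commute)
  also have "\<dots> = induced_edges E S \<union> induced_edges E {u, v, w}"
    by (rule induced_edges_Un_pendant_path[OF G pendant]) (use S_W W in blast)
  also have "\<dots> = (\<Union>q\<in>insert (u, v, w) M. path_edges q)"
    using M_edges induced_edges_pendant_path[OF G path pendant] by (simp add: Un_commute)
  finally have edges: "induced_edges E (\<Union>q\<in>insert (u, v, w) M. path_verts q)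
      = (\<Union>q\<in>insert (u, v, w) M. path_edges q)" .
  have "is_3path V E q" if "q \<in> M" for q
  proof (rule is_3path_induced_subgraph)
    show "is_3path W (induced_edges E W) q"
      using M that unfolding is_3path_induced_matching_def by blast
  qed (use W in blast)
  then have "\<forall>q\<in>insert (u, v, w) M. is_3path V E q"
    using path by blast
  moreover have "path_verts q \<inter> path_verts (u, v, w) = {}" "path_verts (u, v, w) \<inter> path_verts q = {}"
    if "q \<in> M" for q
    using verts_in_W[OF that] path_outside_W by blast+
  then have "\<forall>p\<in>insert (u, v, w) M. \<forall>q\<in>insert (u, v, w) M.
      p \<noteq> q \<longrightarrow> path_verts p \<inter> path_verts q = {}"
    using M unfolding is_3path_induced_matching_def by blast
  ultimately show "is_3path_induced_matching V E (insert (u, v, w) M)"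
    using edges unfolding is_3path_induced_matching_def by blast
qed

lemma nu3_delete_pendant_path_nbhd:
  assumes G: "simple_graph V E"
    and path: "is_3path V E (u, v, w)"
    and pendant: "neighbors E u = {v}"
  shows "nu3 (V - closed_nbhd_edge E v w) (induced_edges E (V - closed_nbhd_edge E v w)) + 1
           \<le> nu3 V E"
proof -
  define W where "W = V - closed_nbhd_edge E v w"
  have "simple_graph W (induced_edges E W)"
    using simple_graph_induced_edges[OF G] unfolding W_def by blast
  then obtain M where M: "finite M" "is_3path_induced_matching W (induced_edges E W) M"
      "card M = nu3 W (induced_edges E W)"
    by (rule nu3_attained)
  have "card (insert (u, v, w) M) = nu3 W (induced_edges E W) + 1"
    using M induced_matching_insert_pendant_path(2)[OF G path pendant _ M(2)] W_def by simp
  moreover have "card (insert (u, v, w) M) \<le> nu3 V E"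
    using M induced_matching_insert_pendant_path(1)[OF G path pendant _ M(2)] W_def
    by (intro card_le_nu3[OF G]) auto
  ultimately show ?thesis
    unfolding W_def by simp
qed

lemma degree_one_neighbors:
  assumes "degree E u = 1" "x \<in> neighbors E u"
  shows "neighbors E u = {x}"
  using assms unfolding degree_def by (metis card_1_singletonE singletonD)

theorem lemma4p3:
  fixes V :: "'a set" and E :: "'a set set" and v vr :: 'a
  assumes "is_tree V E"
    and "v \<in> V"
    and "vr \<in> neighbors E v"
    and "card (neighbors E v) \<ge> 2"
    and "\<forall>u \<in> neighbors E v - {vr}. degree E u = 1"
  shows "nu3 (V - closed_nbhd_edge E v vr) (induced_edges E (V - closed_nbhd_edge E v vr)) + 1
           \<le> nu3 V E"
proof -
  have G: "simple_graph V E"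
    using assms(1) unfolding is_tree_def by blast
  have "\<not> neighbors E v \<subseteq> {vr}"
    using assms(4) card_mono[of "{vr}" "neighbors E v"] by auto
  then obtain u where u: "u \<in> neighbors E v" "u \<noteq> vr"
    by blast
  have uv: "{u, v} \<in> E" and vvr: "{v, vr} \<in> E"
    using u(1) assms(3) unfolding neighbors_def by (simp_all add: insert_commute)
  have "v \<in> neighbors E u"
    using uv unfolding neighbors_def by simp
  then have pendant: "neighbors E u = {v}"
    using assms(5) u by (intro degree_one_neighbors) auto
  have "is_3path V E (u, v, vr)"
    using u(2) simple_graph_edgeD[OF G uv] simple_graph_edgeD[OF G vvr]
    unfolding is_3path_def by (simp add: uv vvr)
  then show ?thesis
    using nu3_delete_pendant_path_nbhd[OF G _ pendant] by blast
qed

end
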